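(* Consider neurons $i=1,\dots,n$ with weights $w_i\ge 0$ and continuous input functions $\beta_i:U\times\mathbb{R}^{i-1}\to\mathbb{R}$, and set $f_i(x_i,\langle u,x_1,\dots,x_{i-1}\rangle)=\tanh(w_i x_i+\beta_i(u,x_1,\dots,x_{i-1}))$. Fix $u\in U$, $i\in[n]$ and $x_1,\dots,x_i\in\mathbb{R}$, and define for every $j\in[i]$ the sequence $(x_{j,t})_{t\ge0}$ by $x_{j,0}=x_j$ and $x_{j,t}=f_j(x_{j,t-1},\langle u,x_{1,t-1},\dots,x_{j-1,t-1}\rangle)$ for $t\ge1$. Then the sequence $(x_{i,t})_{t\ge0}$ is convergent.
   Context: This is the sequence of states of the $i$-th neuron of an $\mathrm{RNC}_+$ when the same input $u$ is repeatedly applied from the state $\langle x_1,\dots,x_i\rangle$; denote it $\mathcal{S}_i(u,x_1,\dots,x_i)$. *)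

theory Defs
  imports "HOL-Analysis.Analysis"
begin

text \<open>States are vectors indexed by nat; neuron j (1 \<le> j \<le> n) has state x j.
  beta j u y is the input function of neuron j; it is required to depend only on
  the coordinates y 1, ..., y (j-1), so it is a function on U \<times> R^(j-1).\<close>

definition rnc_step :: "(nat \<Rightarrow> real) \<Rightarrow> (nat \<Rightarrow> 'u \<Rightarrow> (nat \<Rightarrow> real) \<Rightarrow> real)
    \<Rightarrow> 'u \<Rightarrow> (nat \<Rightarrow> real) \<Rightarrow> (nat \<Rightarrow> real)" where
  "rnc_step w beta u x = (\<lambda>j. tanh (w j * x j + beta j u x))"

primrec rnc_traj :: "(nat \<Rightarrow> real) \<Rightarrow> (nat \<Rightarrow> 'u \<Rightarrow> (nat \<Rightarrow> real) \<Rightarrow> real)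
    \<Rightarrow> 'u \<Rightarrow> (nat \<Rightarrow> real) \<Rightarrow> nat \<Rightarrow> (nat \<Rightarrow> real)" where
  "rnc_traj w beta u x0 0 = x0"
| "rnc_traj w beta u x0 (Suc t) = rnc_step w beta u (rnc_traj w beta u x0 t)"

end

theory Submission
  imports Defs
begin

text \<open>By induction over the neurons, the input beta_j(u, x_{1,t}, ..., x_{j-1,t}) of neuron j
  converges to some c, and as tanh is 1-Lipschitz its state obeys x_{t+1} = g(x_t) + e_t with
  e_t \<rightarrow> 0 and g(x) = tanh(w_j x + c), which is monotone since w_j \<ge> 0. Such a sequence cannot
  cross a point x with g(x) \<noteq> x infinitely often: once it lies on the side towards which g moves x,
  the vanishing perturbation can no longer bring it back. The fixed points of g contain no
  interval (on it, the derivative w_j(1 - x^2) of g would be identically 1), so a cluster point of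
  the bounded sequence is fenced in by such barriers on both sides and is its limit.\<close>

lemma tendsto_fun_iff_componentwise:
  fixes f :: "'a \<Rightarrow> 'b \<Rightarrow> 'c::topological_space"
  shows "(f \<longlongrightarrow> l) F \<longleftrightarrow> (\<forall>i. ((\<lambda>x. f x i) \<longlongrightarrow> l i) F)"
  using limitin_componentwise[of "\<lambda>_. euclidean" UNIV f l F]
  by (simp add: euclidean_product_topology)

lemma abs_tanh_diff_le: "\<bar>tanh x - tanh y\<bar> \<le> \<bar>x - y :: real\<bar>"
proof -
  have "norm (1 - tanh z ^ 2) \<le> 1" for z :: real
  proof -
    have "(tanh z)\<^sup>2 < 1"
      using tanh_real_bounds[of z] by (simp add: abs_square_less_1 abs_less_iff)
    then show ?thesis by (simp add: abs_le_iff)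
  qed
  moreover have "(tanh has_field_derivative 1 - tanh z ^ 2) (at z)" for z :: real
    using has_field_derivative_tanh[of "\<lambda>x. x" z 1 UNIV] by simp
  ultimately show ?thesis
    using field_differentiable_bound[of UNIV tanh "\<lambda>z. 1 - tanh z ^ 2" 1 x y] by auto
qed

lemma ex_not_fixed_point_tanh_affine:
  fixes w c p q :: real
  assumes "p < q"
  shows "\<exists>x\<in>{p<..<q}. tanh (w * x + c) \<noteq> x"
proof (rule ccontr)
  assume "\<not> ?thesis"
  then have fixed: "\<And>x. x \<in> {p<..<q} \<Longrightarrow> tanh (w * x + c) = x" by blast
  have slope: "(1 - x\<^sup>2) * w = 1" if x: "x \<in> {p<..<q}" for x
  proof -
    have "((\<lambda>y. tanh (w * y + c)) has_field_derivative (1 - tanh (w * x + c) ^ 2) * w) (at x)"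
      by (auto intro!: derivative_eq_intros)
    then have "((\<lambda>y. y) has_field_derivative (1 - tanh (w * x + c) ^ 2) * w) (at x)"
      by (rule has_field_derivative_transform_within_open[where S = "{p<..<q}"])
        (use x fixed in auto)
    then show ?thesis
      using DERIV_unique[OF _ DERIV_ident] fixed[OF x] by auto
  qed
  define x1 x2 x3 where "x1 = (3*p + q) / 4" and "x2 = (p + q) / 2" and "x3 = (p + 3*q) / 4"
  have in_interval: "x1 \<in> {p<..<q}" "x2 \<in> {p<..<q}" "x3 \<in> {p<..<q}" and "x1 < x2" "x2 < x3"
    using assms by (auto simp: x1_def x2_def x3_def)
  moreover have "x\<^sup>2 = 1 - 1 / w" if "x \<in> {p<..<q}" for x
    using slope[OF that] by (cases "w = 0") (auto simp: field_simps)
  then have "x1\<^sup>2 = x2\<^sup>2" "x2\<^sup>2 = x3\<^sup>2"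
    using in_interval by auto
  ultimately show False
    by (smt (verit) power2_eq_iff)
qed

lemma eventually_sequentially_if_frequently_invariant:
  assumes "\<exists>\<^sub>F t in sequentially. P t"
    and "\<forall>\<^sub>F t in sequentially. P t \<longrightarrow> P (Suc t)"
  shows "\<forall>\<^sub>F t in sequentially. P t"
proof -
  obtain T where invariant: "\<And>t. t \<ge> T \<Longrightarrow> P t \<Longrightarrow> P (Suc t)"
    using assms(2) by (auto simp: eventually_sequentially)
  obtain t0 where "t0 \<ge> T" "P t0"
    using assms(1) by (auto simp: frequently_sequentially)
  have "P t" if "t \<ge> t0" for t
    using that
  proof (induction t rule: dec_induct)
    case base show ?case by (fact \<open>P t0\<close>)
  next
    case (step t) then show ?case using invariant \<open>t0 \<ge> T\<close> by simp
  qed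
  then show ?thesis
    by (auto simp: eventually_sequentially)
qed

lemma eventually_one_side_of_non_fixed_point:
  fixes a e :: "nat \<Rightarrow> real" and g :: "real \<Rightarrow> real"
  assumes "mono g" and "e \<longlonglongrightarrow> 0" and iter: "\<And>t. a (Suc t) = g (a t) + e t"
    and "g x \<noteq> x"
  shows "(\<forall>\<^sub>F t in sequentially. x \<le> a t) \<or> (\<forall>\<^sub>F t in sequentially. a t \<le> x)"
proof -
  have small: "\<forall>\<^sub>F t in sequentially. \<bar>e t\<bar> < \<bar>g x - x\<bar>"
    using order_tendstoD(2)[OF tendsto_rabs_zero[OF \<open>e \<longlonglongrightarrow> 0\<close>]] \<open>g x \<noteq> x\<close> by simp
  show ?thesis
  proof (cases "x < g x")
    case True
    have stays: "\<forall>\<^sub>F t in sequentially. x \<le> a t \<longrightarrow> x \<le> a (Suc t)"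
      using small by eventually_elim
        (use True monoD[OF \<open>mono g\<close>, of x] iter in fastforce)
    show ?thesis
    proof (cases "\<exists>\<^sub>F t in sequentially. x \<le> a t")
      case True
      with stays show ?thesis by (auto intro: eventually_sequentially_if_frequently_invariant)
    next
      case False
      then have "\<forall>\<^sub>F t in sequentially. a t \<le> x"
        unfolding not_frequently by eventually_elim simp
      then show ?thesis ..
    qed
  next
    case False
    have stays: "\<forall>\<^sub>F t in sequentially. a t \<le> x \<longrightarrow> a (Suc t) \<le> x"
      using small by eventually_elim
        (use False \<open>g x \<noteq> x\<close> monoD[OF \<open>mono g\<close>, of _ x] iter in fastforce)
    show ?thesis
    proof (cases "\<exists>\<^sub>F t in sequentially. a t \<le> x")
      case True
      with stays show ?thesis by (auto intro: eventually_sequentially_if_frequently_invariant)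
    next
      case False
      then have "\<forall>\<^sub>F t in sequentially. x \<le> a t"
        unfolding not_frequently by eventually_elim simp
      then show ?thesis ..
    qed
  qed
qed

lemma frequently_near_subsequence_limit:
  assumes "strict_mono r" and "(a \<circ> r) \<longlonglongrightarrow> l" and "d > 0"
  shows "\<exists>\<^sub>F t in sequentially. dist (a t) l < d"
  unfolding frequently_sequentially
proof
  fix N
  obtain M where M: "\<And>m. m \<ge> M \<Longrightarrow> dist (a (r m)) l < d"
    using metric_LIMSEQ_D[OF assms(2,3)] by auto
  have "r (max M N) \<ge> N"
    using seq_suble[OF \<open>strict_mono r\<close>, of "max M N"] by simp
  with M[of "max M N"] show "\<exists>t\<ge>N. dist (a t) l < d" by auto
qed

lemma LIMSEQ_if_cluster_point_and_eventually_one_sided: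
  fixes a :: "nat \<Rightarrow> real"
  assumes cluster: "\<And>d. d > 0 \<Longrightarrow> \<exists>\<^sub>F t in sequentially. \<bar>a t - l\<bar> < d"
    and one_sided: "\<And>p q. p < q \<Longrightarrow>
      \<exists>x\<in>{p<..<q}. (\<forall>\<^sub>F t in sequentially. x \<le> a t) \<or> (\<forall>\<^sub>F t in sequentially. a t \<le> x)"
  shows "a \<longlonglongrightarrow> l"
proof (rule tendstoI)
  fix \<epsilon> :: real
  assume "\<epsilon> > 0"
  obtain x where x: "l < x" "x < l + \<epsilon>"
    and "(\<forall>\<^sub>F t in sequentially. x \<le> a t) \<or> (\<forall>\<^sub>F t in sequentially. a t \<le> x)"
    using one_sided[of l "l + \<epsilon>"] \<open>\<epsilon> > 0\<close> by auto
  moreover have "\<not> (\<forall>\<^sub>F t in sequentially. x \<le> a t)"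
  proof
    assume "\<forall>\<^sub>F t in sequentially. x \<le> a t"
    then have "\<forall>\<^sub>F t in sequentially. \<not> \<bar>a t - l\<bar> < x - l"
      by eventually_elim auto
    with cluster[of "x - l"] x show False
      by (simp add: frequently_def)
  qed
  ultimately have below: "\<forall>\<^sub>F t in sequentially. a t < l + \<epsilon>"
    by (auto elim: eventually_mono)
  obtain y where y: "l - \<epsilon> < y" "y < l"
    and "(\<forall>\<^sub>F t in sequentially. y \<le> a t) \<or> (\<forall>\<^sub>F t in sequentially. a t \<le> y)"
    using one_sided[of "l - \<epsilon>" l] \<open>\<epsilon> > 0\<close> by auto
  moreover have "\<not> (\<forall>\<^sub>F t in sequentially. a t \<le> y)"
  proof
    assume "\<forall>\<^sub>F t in sequentially. a t \<le> y"
    then have "\<forall>\<^sub>F t in sequentially. \<not> \<bar>a t - l\<bar> < l - y"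
      by eventually_elim auto
    with cluster[of "l - y"] y show False
      by (simp add: frequently_def)
  qed
  ultimately have above: "\<forall>\<^sub>F t in sequentially. l - \<epsilon> < a t"
    by (auto elim: eventually_mono)
  from below above show "\<forall>\<^sub>F t in sequentially. dist (a t) l < \<epsilon>"
    by eventually_elim (simp add: dist_real_def abs_less_iff)
qed

lemma convergent_perturbed_mono_iteration:
  fixes a e :: "nat \<Rightarrow> real" and g :: "real \<Rightarrow> real"
  assumes "mono g" and "e \<longlonglongrightarrow> 0" and "\<And>t. a (Suc t) = g (a t) + e t"
    and "bounded (range a)"
    and non_fixed: "\<And>p q. p < q \<Longrightarrow> \<exists>x\<in>{p<..<q}. g x \<noteq> x"
  shows "convergent a"
proof -
  obtain l r where "strict_mono r" "(a \<circ> r) \<longlonglongrightarrow> l"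
    using bounded_imp_convergent_subsequence[OF \<open>bounded (range a)\<close>] by blast
  have "a \<longlonglongrightarrow> l"
  proof (rule LIMSEQ_if_cluster_point_and_eventually_one_sided)
    show "\<exists>\<^sub>F t in sequentially. \<bar>a t - l\<bar> < d" if "d > 0" for d
      using frequently_near_subsequence_limit[OF \<open>strict_mono r\<close> \<open>(a \<circ> r) \<longlonglongrightarrow> l\<close> that]
      by (simp add: dist_real_def)
    show "\<exists>x\<in>{p<..<q}. (\<forall>\<^sub>F t in sequentially. x \<le> a t) \<or> (\<forall>\<^sub>F t in sequentially. a t \<le> x)"
      if "p < q" for p q
      using non_fixed[OF that] eventually_one_side_of_non_fixed_point[OF assms(1-3)] by blast
  qed
  then show ?thesis
    by (auto simp: convergent_def)
qed

lemma convergent_tanh_iteration: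
  fixes a b :: "nat \<Rightarrow> real"
  assumes "w \<ge> 0" and "b \<longlonglongrightarrow> c" and iter: "\<And>t. a (Suc t) = tanh (w * a t + b t)"
  shows "convergent a"
proof -
  define e where "e t = tanh (w * a t + b t) - tanh (w * a t + c)" for t
  have "mono (\<lambda>x. tanh (w * x + c))"
    using \<open>w \<ge> 0\<close> by (auto intro!: monoI mult_left_mono)
  moreover have "e \<longlonglongrightarrow> 0"
  proof (rule Lim_null_comparison)
    show "\<forall>\<^sub>F t in sequentially. norm (e t) \<le> \<bar>b t - c\<bar>"
      using abs_tanh_diff_le[of "w * a t + b t" "w * a t + c" for t] by (simp add: e_def)
    show "(\<lambda>t. \<bar>b t - c\<bar>) \<longlonglongrightarrow> 0"
      using \<open>b \<longlonglongrightarrow> c\<close> by (intro tendsto_rabs_zero) (simp add: LIM_zero)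
  qed
  moreover have "a (Suc t) = tanh (w * a t + c) + e t" for t
    by (simp add: iter e_def)
  moreover have "bounded (range a)"
  proof -
    have "\<bar>a (Suc t)\<bar> \<le> 1" for t
      using tanh_real_bounds[of "w * a t + b t"] by (simp add: iter abs_le_iff)
    then have "\<bar>a t\<bar> \<le> max 1 \<bar>a 0\<bar>" for t
      by (cases t) (simp_all add: le_max_iff_disj)
    then show ?thesis
      unfolding bounded_iff by auto
  qed
  ultimately show ?thesis
    using convergent_perturbed_mono_iteration ex_not_fixed_point_tanh_affine by blast
qed

lemma convergent_fun_of_convergent_coordinates:
  fixes beta :: "'u::topological_space \<Rightarrow> ('i \<Rightarrow> 'a::topological_space) \<Rightarrow> 'b::topological_space"
    and X :: "nat \<Rightarrow> 'i \<Rightarrow> 'a"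
  assumes cont: "continuous_on (U \<times> UNIV) (\<lambda>(v, y). beta v y)" and "u \<in> U"
    and dep: "\<And>v y z. (\<forall>k\<in>K. y k = z k) \<Longrightarrow> beta v y = beta v z"
    and conv: "\<And>k. k \<in> K \<Longrightarrow> convergent (\<lambda>t. X t k)"
  shows "convergent (\<lambda>t. beta u (X t))"
proof -
  obtain L where L: "\<And>k. k \<in> K \<Longrightarrow> (\<lambda>t. X t k) \<longlonglongrightarrow> L k"
    using bchoice[of K "\<lambda>k L. (\<lambda>t. X t k) \<longlonglongrightarrow> L"] conv by (auto simp: convergent_def)
  \<comment> \<open>The coordinates outside K need not converge, but beta ignores them.\<close>
  define Y where "Y t k = (if k \<in> K then X t k else undefined)" for t k
  define Y_lim where "Y_lim k = (if k \<in> K then L k else undefined)" for k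
  have "Y \<longlonglongrightarrow> Y_lim"
    unfolding tendsto_fun_iff_componentwise by (simp add: Y_def Y_lim_def L)
  then have "(\<lambda>t. (\<lambda>(v, y). beta v y) (u, Y t)) \<longlonglongrightarrow> (\<lambda>(v, y). beta v y) (u, Y_lim)"
    by (intro continuous_on_tendsto_compose[OF cont] tendsto_Pair tendsto_const) (auto simp: \<open>u \<in> U\<close>)
  moreover have "beta u (Y t) = beta u (X t)" for t
    by (rule dep) (simp add: Y_def)
  ultimately show ?thesis
    by (auto simp: convergent_def)
qed

theorem proposition4:
  fixes n i :: nat
    and w :: "nat \<Rightarrow> real"
    and beta :: "nat \<Rightarrow> 'u::topological_space \<Rightarrow> (nat \<Rightarrow> real) \<Rightarrow> real"
    and U :: "'u set"
    and u :: 'u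
    and x0 :: "nat \<Rightarrow> real"
  assumes w_nonneg: "\<forall>j\<in>{1..n}. w j \<ge> 0"
    and beta_dep: "\<forall>j\<in>{1..n}. \<forall>v y z. (\<forall>k\<in>{1..<j}. y k = z k) \<longrightarrow> beta j v y = beta j v z"
    and beta_cont: "\<forall>j\<in>{1..n}. continuous_on (U \<times> UNIV) (\<lambda>(v, y). beta j v y)"
    and u_in: "u \<in> U"
    and i_in: "i \<in> {1..n}"
  shows "convergent (\<lambda>t. rnc_traj w beta u x0 t i)"
proof -
  define X where "X = rnc_traj w beta u x0"
  have "convergent (\<lambda>t. X t j)" if "j \<in> {1..n}" for j
    using that
  proof (induction j rule: less_induct)
    case (less j)
    have "convergent (\<lambda>t. beta j u (X t))"
    proof (rule convergent_fun_of_convergent_coordinates[where beta = "beta j" and K = "{1..<j}"])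
      show "continuous_on (U \<times> UNIV) (\<lambda>(v, y). beta j v y)"
        using beta_cont less.prems by blast
      show "beta j v y = beta j v z" if "\<forall>k\<in>{1..<j}. y k = z k" for v y z
        using beta_dep less.prems that by blast
      show "convergent (\<lambda>t. X t k)" if "k \<in> {1..<j}" for k
        using less.IH less.prems that by auto
    qed (fact u_in)
    then obtain c where "(\<lambda>t. beta j u (X t)) \<longlonglongrightarrow> c"
      by (auto simp: convergent_def)
    moreover have "X (Suc t) j = tanh (w j * X t j + beta j u (X t))" for t
      by (simp add: X_def rnc_step_def)
    ultimately show ?case
      using w_nonneg less.prems by (intro convergent_tanh_iteration[where w = "w j"]) auto
  qed
  with i_in show ?thesis
    by (simp add: X_def)
qed

end
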